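(* Let $n\ge1$ and $K=\ker(f_{\Delta_n}\circ f_{\Delta_n^*}^* )=\ker(f_{\Delta_n^*}\circ f_{\Delta_n}^* )\cong(\mathbb{Z}/(n+1))^n\subset\mathbb{T}^n$. Then the inclusion $f_{\Delta_n^*}^*(\mathbb{T}^n)\hookrightarrow\mathbb{T}^{n+1}$ induces a group isomorphism $f_{\Delta_n^*}^*(\mathbb{T}^n)/D_{\Delta_n}\cong \mathbb{T}^{n+1}/N_{\Delta_n}$, and $f_{\Delta_n^*}^*$ induces a group isomorphism $\mathbb{T}^n/K\cong f_{\Delta_n^*}^*(\mathbb{T}^n)/D_{\Delta_n}$. Symmetrically, the inclusion induces $f_{\Delta_n}^*(\mathbb{T}^n)/D_{\Delta_n^*}\cong\mathbb{T}^{n+1}/N_{\Delta_n^*}$ and $f_{\Delta_n}^*$ induces $\mathbb{T}^n/K\cong f_{\Delta_n}^*(\mathbb{T}^n)/D_{\Delta_n^*}$. In particular $D_{\Delta_n}$ and $D_{\Delta_n^*}$ are finite.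
   Context: Let $e_1,\dots,e_n$ be the standard basis of $\mathbb{R}^n$ and $\mathbf{1}=(1,\dots,1)\in\mathbb{R}^n$. Put $u_i=e_i$ for $1\le i\le n$, $u_{n+1}=-\mathbf{1}$, and $v_i=(n+1)e_i-\mathbf{1}$ for $1\le i\le n$, $v_{n+1}=-\mathbf{1}$. Define linear maps $F_{\Delta_n},F_{\Delta_n^*}:\mathbb{R}^{n+1}\to\mathbb{R}^n$ by $F_{\Delta_n}(x)=\sum_{i=1}^{n+1}x_iu_i$ and $F_{\Delta_n^*}(x)=\sum_{i=1}^{n+1}x_iv_i$, and their transposes $F_{\Delta_n}^*(y)=(u_1\cdot y,\dots,u_{n+1}\cdot y)$, $F_{\Delta_n^*}^*(y)=(v_1\cdot y,\dots,v_{n+1}\cdot y)$. Write $\mathbb{T}^k=\mathbb{R}^k/\mathbb{Z}^k$. These integer matrices induce group homomorphisms $f_{\Delta_n},f_{\Delta_n^*}:\mathbb{T}^{n+1}\to\mathbb{T}^n$ and $f_{\Delta_n}^*,f_{\Delta_n^*}^*:\mathbb{T}^n\to\mathbb{T}^{n+1}$. Let $N_{\Delta_n}=\ker f_{\Delta_n}$, $N_{\Delta_n^*}=\ker f_{\Delta_n^*}$, $D_{\Delta_n}=N_{\Delta_n}\cap f_{\Delta_n^*}^*(\mathbb{T}^n)$ and $D_{\Delta_n^*}=N_{\Delta_n^*}\cap f_{\Delta_n}^*(\mathbb{T}^n)$. *)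

theory Defs
  imports "HOL-Analysis.Analysis" "HOL-Algebra.Algebra"
begin

(* Conventions: a point of R^k is a function nat => real vanishing outside {0..<k};
   the paper's indices 1..k are shifted to 0..k-1.  In particular the paper's
   u_{n+1}, v_{n+1} are u n n, v n n here. *)

(* The torus T^k = R^k / Z^k, elements represented by their unique
   representative in [0,1)^k, with componentwise addition mod 1. *)
definition torus :: "nat \<Rightarrow> (nat \<Rightarrow> real) monoid" where
  "torus k = \<lparr> carrier = {x. (\<forall>i<k. 0 \<le> x i \<and> x i < 1) \<and> (\<forall>i\<ge>k. x i = 0)},
               monoid.mult = (\<lambda>x y. \<lambda>i. frac (x i + y i)),
               one = (\<lambda>_. 0) \<rparr>"

definition e_vec :: "nat \<Rightarrow> nat \<Rightarrow> (nat \<Rightarrow> real)" where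
  "e_vec n i = (\<lambda>j. if j < n \<and> j = i then 1 else 0)"

definition one_vec :: "nat \<Rightarrow> (nat \<Rightarrow> real)" where
  "one_vec n = (\<lambda>j. if j < n then 1 else 0)"

definition u_vec :: "nat \<Rightarrow> nat \<Rightarrow> (nat \<Rightarrow> real)" where
  "u_vec n i = (if i < n then e_vec n i else (\<lambda>j. - one_vec n j))"

definition v_vec :: "nat \<Rightarrow> nat \<Rightarrow> (nat \<Rightarrow> real)" where
  "v_vec n i = (if i < n then (\<lambda>j. real (n+1) * e_vec n i j - one_vec n j)
                else (\<lambda>j. - one_vec n j))"

definition dotn :: "nat \<Rightarrow> (nat \<Rightarrow> real) \<Rightarrow> (nat \<Rightarrow> real) \<Rightarrow> real" where
  "dotn n a b = (\<Sum>j<n. a j * b j)"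

definition Fmap :: "(nat \<Rightarrow> nat \<Rightarrow> (nat \<Rightarrow> real)) \<Rightarrow> nat \<Rightarrow> (nat \<Rightarrow> real) \<Rightarrow> (nat \<Rightarrow> real)" where
  "Fmap w n x = (\<lambda>j. \<Sum>i\<le>n. x i * w n i j)"

definition FmapT :: "(nat \<Rightarrow> nat \<Rightarrow> (nat \<Rightarrow> real)) \<Rightarrow> nat \<Rightarrow> (nat \<Rightarrow> real) \<Rightarrow> (nat \<Rightarrow> real)" where
  "FmapT w n y = (\<lambda>i. if i \<le> n then dotn n (w n i) y else 0)"

(* induced map on tori (integer matrices): apply to representative, reduce mod 1 *)
definition tor :: "((nat \<Rightarrow> real) \<Rightarrow> (nat \<Rightarrow> real)) \<Rightarrow> (nat \<Rightarrow> real) \<Rightarrow> (nat \<Rightarrow> real)" where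
  "tor F x = (\<lambda>j. frac (F x j))"

definition f_D :: "nat \<Rightarrow> (nat \<Rightarrow> real) \<Rightarrow> (nat \<Rightarrow> real)" where
  "f_D n = tor (Fmap u_vec n)"
definition f_Ds :: "nat \<Rightarrow> (nat \<Rightarrow> real) \<Rightarrow> (nat \<Rightarrow> real)" where
  "f_Ds n = tor (Fmap v_vec n)"
definition fT_D :: "nat \<Rightarrow> (nat \<Rightarrow> real) \<Rightarrow> (nat \<Rightarrow> real)" where
  "fT_D n = tor (FmapT u_vec n)"
definition fT_Ds :: "nat \<Rightarrow> (nat \<Rightarrow> real) \<Rightarrow> (nat \<Rightarrow> real)" where
  "fT_Ds n = tor (FmapT v_vec n)"

definition N_D :: "nat \<Rightarrow> (nat \<Rightarrow> real) set" where
  "N_D n = kernel (torus (n+1)) (torus n) (f_D n)"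
definition N_Ds :: "nat \<Rightarrow> (nat \<Rightarrow> real) set" where
  "N_Ds n = kernel (torus (n+1)) (torus n) (f_Ds n)"
definition D_D :: "nat \<Rightarrow> (nat \<Rightarrow> real) set" where
  "D_D n = N_D n \<inter> fT_Ds n ` carrier (torus n)"
definition D_Ds :: "nat \<Rightarrow> (nat \<Rightarrow> real) set" where
  "D_Ds n = N_Ds n \<inter> fT_D n ` carrier (torus n)"

definition K_set :: "nat \<Rightarrow> (nat \<Rightarrow> real) set" where
  "K_set n = kernel (torus n) (torus n) (f_D n \<circ> fT_Ds n)"

end

theory Submission
  imports Defs
begin

(* Both composites f_Delta o f*_Delta* and f_Delta* o f*_Delta are multiplication by n+1 on T^n,
   because sum_i (v_i . y) u_i = sum_i (u_i . y) v_i = (n+1) y.  Multiplication by n+1 is onto,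
   with kernel the (n+1)-torsion (Z/(n+1))^n.  Now let f : G -> H and g : H -> G be group
   homomorphisms with f o g onto.  Then every coset of ker f meets g(H), so by the second
   isomorphism theorem g(H)/(ker f \<inter> g(H)) is G/ker f, while g induces
   H/ker(f o g) = g(H)/(ker f \<inter> g(H)); and ker f \<inter> g(H) = g(ker(f o g)) is finite. *)

section \<open>Quotients attached to a pair of homomorphisms\<close>

lemma (in group_hom) image_kernel_rcos:
  assumes "x \<in> carrier G"
  shows "h ` (kernel G H h #> x) = {h x}"
proof
  show "h ` (kernel G H h #> x) \<subseteq> {h x}"
    using assms by (auto simp: kernel_def r_coset_def)
  have "\<one> \<otimes> x \<in> kernel G H h #> x"
    by (auto simp: kernel_def r_coset_def)
  then show "{h x} \<subseteq> h ` (kernel G H h #> x)"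
    using assms by force
qed

lemma (in group_hom) FactGroup_iso_rcos:
  assumes "h ` carrier G = carrier H"
  shows "\<exists>\<phi>. \<phi> \<in> iso (G Mod kernel G H h) H \<and> (\<forall>x\<in>carrier G. \<phi> (kernel G H h #> x) = h x)"
  using FactGroup_iso_set[OF assms] image_kernel_rcos by auto

lemma (in group) kernel_set_mult_image:
  assumes "group K" and f: "f \<in> hom G K" and g: "g \<in> hom H G"
    and surj: "(f \<circ> g) ` carrier H = carrier K"
  shows "kernel G K f <#> g ` carrier H = carrier G"
proof
  interpret K: group K by fact
  interpret f: group_hom G K f by unfold_locales (rule f)
  show "kernel G K f <#> g ` carrier H \<subseteq> carrier G"
    using g by (auto simp: set_mult_def kernel_def hom_in_carrier)
  show "carrier G \<subseteq> kernel G K f <#> g ` carrier H"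
  proof
    fix x assume x: "x \<in> carrier G"
    then obtain y where y: "y \<in> carrier H" and fgy: "f (g y) = f x"
      using surj f.hom_closed by (metis comp_apply imageE)
    have gy: "g y \<in> carrier G" using g y by (rule hom_in_carrier)
    have "x \<otimes> inv (g y) \<in> kernel G K f"
      using x gy fgy by (simp add: kernel_def)
    moreover have "x = (x \<otimes> inv (g y)) \<otimes> g y"
      using x gy by (simp add: m_assoc)
    ultimately show "x \<in> kernel G K f <#> g ` carrier H"
      using y unfolding set_mult_def by blast
  qed
qed

lemma (in group) FactGroup_inter_iso_of_set_mult_eq:
  assumes "N \<lhd> G" and "subgroup A G" and "N <#> A = carrier G"
  shows "\<exists>\<phi>. \<phi> \<in> iso (G\<lparr>carrier := A\<rparr> Mod (N \<inter> A)) (G Mod N)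
             \<and> (\<forall>a\<in>A. \<phi> ((N \<inter> A) #> a) = N #> a)"
proof -
  interpret second_isomorphism_grp N G A
    using assms by (simp add: second_isomorphism_grp_def second_isomorphism_grp_axioms_def)
  have "group_hom (G\<lparr>carrier := A\<rparr>) (G Mod N) (\<lambda>a. N #> a)"
    using normal_intersection_hom assms(3) by simp
  moreover have "(\<lambda>a. N #> a) ` carrier (G\<lparr>carrier := A\<rparr>) = carrier (G Mod N)"
    using normal_intersection_hom_surj assms(3) by simp
  ultimately show ?thesis
    using group_hom.FactGroup_iso_rcos normal_intersection_hom_kernel assms(3) by fastforce
qed

lemma (in group) FactGroup_preimage_iso_inter:
  assumes "group H" and g: "g \<in> hom H G" and "N \<lhd> G"
  defines "A \<equiv> g ` carrier H"
  shows "\<exists>\<psi>. \<psi> \<in> iso (H Mod {x \<in> carrier H. g x \<in> N}) (G\<lparr>carrier := A\<rparr> Mod (N \<inter> A))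
             \<and> (\<forall>x\<in>carrier H. \<psi> ({x \<in> carrier H. g x \<in> N} #>\<^bsub>H\<^esub> x) = (N \<inter> A) #> g x)"
proof -
  interpret H: group H by fact
  interpret g: group_hom H G g by unfold_locales (rule g)
  have A: "subgroup A G" unfolding A_def by (rule g.img_is_subgroup)
  interpret second_isomorphism_grp N G A
    using assms A by (simp add: second_isomorphism_grp_def second_isomorphism_grp_axioms_def)
  have NA: "N \<inter> A \<lhd> G\<lparr>carrier := A\<rparr>"
    using normal_subgrp_intersection_normal by (simp add: Int_commute)
  have "g \<in> hom H (G\<lparr>carrier := A\<rparr>)"
    using g by (auto simp: hom_def A_def)
  then have "(\<lambda>x. (N \<inter> A) #> g x) \<in> hom H (G\<lparr>carrier := A\<rparr> Mod (N \<inter> A))"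
    using Group.hom_compose[OF _ normal.r_coset_hom_Mod[OF NA]] by (simp add: comp_def)
  then interpret p: group_hom H "G\<lparr>carrier := A\<rparr> Mod (N \<inter> A)" "\<lambda>x. (N \<inter> A) #> g x"
    by (intro group_hom.intro group_hom_axioms.intro H.is_group normal.factorgroup_is_group[OF NA])
  have "(\<lambda>x. (N \<inter> A) #> g x) ` carrier H = carrier (G\<lparr>carrier := A\<rparr> Mod (N \<inter> A))"
    by (auto simp: FactGroup_def RCOSETS_def A_def)
  moreover have "kernel H (G\<lparr>carrier := A\<rparr> Mod (N \<inter> A)) (\<lambda>x. (N \<inter> A) #> g x)
    = {x \<in> carrier H. g x \<in> N}"
  proof -
    have NA_sub: "subgroup (N \<inter> A) G"
      using normal_imp_subgroup[OF \<open>N \<lhd> G\<close>] A by (rule subgroups_Inter_pair)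
    have "(N \<inter> A) #> g x = N \<inter> A \<longleftrightarrow> g x \<in> N" if "x \<in> carrier H" for x
    proof -
      have gx: "g x \<in> carrier G" using that by simp
      have "(N \<inter> A) #> g x = N \<inter> A \<longleftrightarrow> g x \<in> N \<inter> A"
        using coset_join1[OF _ gx NA_sub] coset_join2[OF gx NA_sub] by blast
      then show ?thesis using that by (simp add: A_def)
    qed
    then show ?thesis by (auto simp: kernel_def FactGroup_def)
  qed
  ultimately show ?thesis
    using p.FactGroup_iso_rcos by auto
qed

lemma (in group) FactGroup_isos_of_surj_comp:
  assumes "group H" and f: "f \<in> hom G H" and g: "g \<in> hom H G"
    and surj: "(f \<circ> g) ` carrier H = carrier H"
  defines "N \<equiv> kernel G H f" and "A \<equiv> g ` carrier H"
  shows "\<exists>\<phi>. \<phi> \<in> iso (G\<lparr>carrier := A\<rparr> Mod (N \<inter> A)) (G Mod N)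
             \<and> (\<forall>a\<in>A. \<phi> ((N \<inter> A) #> a) = N #> a)"
    and "\<exists>\<psi>. \<psi> \<in> iso (H Mod kernel H H (f \<circ> g)) (G\<lparr>carrier := A\<rparr> Mod (N \<inter> A))
             \<and> (\<forall>x\<in>carrier H. \<psi> (kernel H H (f \<circ> g) #>\<^bsub>H\<^esub> x) = (N \<inter> A) #> g x)"
    and "N \<inter> A = g ` kernel H H (f \<circ> g)"
proof -
  interpret H: group H by fact
  interpret f: group_hom G H f by unfold_locales (rule f)
  interpret g: group_hom H G g by unfold_locales (rule g)
  have N: "N \<lhd> G" unfolding N_def by (rule f.normal_kernel)
  have K: "kernel H H (f \<circ> g) = {x \<in> carrier H. g x \<in> N}"
    by (auto simp: kernel_def N_def)
  show "\<exists>\<phi>. \<phi> \<in> iso (G\<lparr>carrier := A\<rparr> Mod (N \<inter> A)) (G Mod N)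
             \<and> (\<forall>a\<in>A. \<phi> ((N \<inter> A) #> a) = N #> a)"
    using FactGroup_inter_iso_of_set_mult_eq[OF N g.img_is_subgroup]
      kernel_set_mult_image[OF \<open>group H\<close> f g surj] by (simp add: N_def A_def)
  show "\<exists>\<psi>. \<psi> \<in> iso (H Mod kernel H H (f \<circ> g)) (G\<lparr>carrier := A\<rparr> Mod (N \<inter> A))
             \<and> (\<forall>x\<in>carrier H. \<psi> (kernel H H (f \<circ> g) #>\<^bsub>H\<^esub> x) = (N \<inter> A) #> g x)"
    unfolding K A_def by (rule FactGroup_preimage_iso_inter[OF \<open>group H\<close> g N])
  show "N \<inter> A = g ` kernel H H (f \<circ> g)"
    unfolding K A_def by auto
qed

section \<open>The torus and maps induced by integer matrices\<close>

lemma frac_eq_if_diff_in_Ints: "a - b \<in> \<int> \<Longrightarrow> frac a = frac b" for a b :: real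
  using frac_add_int_right[of "a - b" b] by simp

lemma frac_minus_self_in_Ints: "frac a - a \<in> \<int>" for a :: real
  by (simp add: frac_def)

lemma torus_mult_eq: "x \<otimes>\<^bsub>torus k\<^esub> y = (\<lambda>i. frac (x i + y i))"
  by (simp add: torus_def)

lemma frac_torus_carrier: "x \<in> carrier (torus k) \<Longrightarrow> frac (x i) = x i"
  by (cases "i < k") (auto simp: torus_def frac_eq)

lemma comm_group_torus: "comm_group (torus k)"
proof (rule comm_groupI)
  fix x assume x: "x \<in> carrier (torus k)"
  then show "\<one>\<^bsub>torus k\<^esub> \<otimes>\<^bsub>torus k\<^esub> x = x"
    by (simp add: torus_mult_eq frac_torus_carrier torus_def)
  show "\<exists>y\<in>carrier (torus k). y \<otimes>\<^bsub>torus k\<^esub> x = \<one>\<^bsub>torus k\<^esub>"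
  proof
    show "(\<lambda>i. frac (- x i)) \<otimes>\<^bsub>torus k\<^esub> x = \<one>\<^bsub>torus k\<^esub>"
      by (simp add: torus_def)
    show "(\<lambda>i. frac (- x i)) \<in> carrier (torus k)"
      using x by (auto simp: torus_def frac_lt_1)
  qed
qed (auto simp: torus_def frac_lt_1 ac_simps)

lemma group_torus: "group (torus k)"
  by (rule comm_group.axioms(2)[OF comm_group_torus])

definition respects_int_lattice :: "((nat \<Rightarrow> real) \<Rightarrow> nat \<Rightarrow> real) \<Rightarrow> bool" where
  "respects_int_lattice F \<longleftrightarrow>
     (\<forall>a b. (\<forall>i. a i - b i \<in> \<int>) \<longrightarrow> (\<forall>j. F a j - F b j \<in> \<int>))"

lemma tor_eq_if_diff_in_Ints:
  assumes "respects_int_lattice F" and "\<And>i. a i - b i \<in> \<int>"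
  shows "tor F a = tor F b"
  unfolding tor_def
  by (intro ext frac_eq_if_diff_in_Ints) (use assms in \<open>auto simp: respects_int_lattice_def\<close>)

lemma tor_tor:
  assumes "respects_int_lattice F"
  shows "tor F (tor G y) = tor (F \<circ> G) y"
proof -
  have "tor F (\<lambda>j. frac (G y j)) = tor F (G y)"
    by (rule tor_eq_if_diff_in_Ints[OF assms frac_minus_self_in_Ints])
  then show ?thesis by (simp add: tor_def)
qed

lemma tor_in_carrier: "(\<And>x j. k \<le> j \<Longrightarrow> F x j = 0) \<Longrightarrow> tor F x \<in> carrier (torus k)"
  by (auto simp: tor_def torus_def frac_lt_1)

lemma tor_hom:
  assumes add: "\<And>x y j. F (\<lambda>i. x i + y i) j = F x j + F y j"
    and F: "respects_int_lattice F" and vanish: "\<And>x j. m \<le> j \<Longrightarrow> F x j = 0"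
  shows "tor F \<in> hom (torus k) (torus m)"
proof (rule homI)
  fix x y
  show "tor F x \<in> carrier (torus m)" using vanish by (rule tor_in_carrier)
  have "tor F (x \<otimes>\<^bsub>torus k\<^esub> y) = tor F (\<lambda>i. x i + y i)"
    unfolding torus_mult_eq by (rule tor_eq_if_diff_in_Ints[OF F frac_minus_self_in_Ints])
  also have "\<dots> = tor F x \<otimes>\<^bsub>torus m\<^esub> tor F y"
    by (simp add: tor_def torus_mult_eq add)
  finally show "tor F (x \<otimes>\<^bsub>torus k\<^esub> y) = tor F x \<otimes>\<^bsub>torus m\<^esub> tor F y" .
qed

definition scale_torus :: "nat \<Rightarrow> nat \<Rightarrow> (nat \<Rightarrow> real) \<Rightarrow> nat \<Rightarrow> real" where
  "scale_torus k m = tor (\<lambda>y j. if j < k then real m * y j else 0)"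

lemma scale_torus_surj:
  assumes "0 < m"
  shows "scale_torus k m ` carrier (torus k) = carrier (torus k)"
proof
  show "scale_torus k m ` carrier (torus k) \<subseteq> carrier (torus k)"
    unfolding scale_torus_def by (auto intro: tor_in_carrier)
  show "carrier (torus k) \<subseteq> scale_torus k m ` carrier (torus k)"
  proof
    fix z assume z: "z \<in> carrier (torus k)"
    have "(\<lambda>j. z j / real m) \<in> carrier (torus k)"
      using z assms by (auto simp: torus_def)
    moreover have "scale_torus k m (\<lambda>j. z j / real m) = z"
      using z assms frac_torus_carrier[OF z] by (auto simp: scale_torus_def tor_def torus_def)
    ultimately show "z \<in> scale_torus k m ` carrier (torus k)" by force
  qed
qed

lemma kernel_scale_torus:
  "kernel (torus k) (torus k) (scale_torus k m) =
     {y \<in> carrier (torus k). \<forall>j<k. real m * y j \<in> \<int>}"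
  by (auto simp: kernel_def scale_torus_def tor_def torus_def fun_eq_iff)

lemma Fmap_add: "Fmap w n (\<lambda>i. x i + y i) j = Fmap w n x j + Fmap w n y j"
  by (simp add: Fmap_def algebra_simps sum.distrib)

lemma FmapT_add: "FmapT w n (\<lambda>i. x i + y i) j = FmapT w n x j + FmapT w n y j"
  by (simp add: FmapT_def dotn_def algebra_simps sum.distrib)

lemma respects_int_lattice_Fmap:
  assumes "\<And>i j. w n i j \<in> \<int>"
  shows "respects_int_lattice (Fmap w n)"
  unfolding respects_int_lattice_def
proof (intro allI impI)
  fix a b :: "nat \<Rightarrow> real" and j assume "\<forall>i. a i - b i \<in> \<int>"
  then have "(\<Sum>i\<le>n. (a i - b i) * w n i j) \<in> \<int>"
    using assms by (intro Ints_sum Ints_mult) auto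
  then show "Fmap w n a j - Fmap w n b j \<in> \<int>"
    by (simp add: Fmap_def sum_subtractf algebra_simps)
qed

lemma respects_int_lattice_FmapT:
  assumes "\<And>i j. w n i j \<in> \<int>"
  shows "respects_int_lattice (FmapT w n)"
  unfolding respects_int_lattice_def
proof (intro allI impI)
  fix a b :: "nat \<Rightarrow> real" and i assume "\<forall>j. a j - b j \<in> \<int>"
  then have "(\<Sum>j<n. w n i j * (a j - b j)) \<in> \<int>"
    using assms by (intro Ints_sum Ints_mult) auto
  then show "FmapT w n a i - FmapT w n b i \<in> \<int>"
    by (simp add: FmapT_def dotn_def sum_subtractf algebra_simps)
qed

lemma tor_Fmap_hom:
  assumes "\<And>i j. w n i j \<in> \<int>" and "\<And>i j. n \<le> j \<Longrightarrow> w n i j = 0"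
  shows "tor (Fmap w n) \<in> hom (torus (n+1)) (torus n)"
  by (rule tor_hom[OF Fmap_add respects_int_lattice_Fmap[of w n, OF assms(1)]])
    (simp add: Fmap_def assms(2))

lemma tor_FmapT_hom:
  assumes "\<And>i j. w n i j \<in> \<int>"
  shows "tor (FmapT w n) \<in> hom (torus n) (torus (n+1))"
  by (rule tor_hom[OF FmapT_add respects_int_lattice_FmapT[of w n, OF assms]]) (simp add: FmapT_def)

section \<open>The maps of the simplex and of its dual\<close>

lemma u_vec_in_Ints: "u_vec n i j \<in> \<int>"
  by (simp add: u_vec_def e_vec_def one_vec_def)

lemma v_vec_in_Ints: "v_vec n i j \<in> \<int>"
  by (auto simp: v_vec_def e_vec_def one_vec_def intro!: Ints_diff Ints_mult)

lemma u_vec_eq_0: "n \<le> j \<Longrightarrow> u_vec n i j = 0"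
  by (simp add: u_vec_def e_vec_def one_vec_def)

lemma v_vec_eq_0: "n \<le> j \<Longrightarrow> v_vec n i j = 0"
  by (simp add: v_vec_def e_vec_def one_vec_def)

lemma f_D_hom: "f_D n \<in> hom (torus (n+1)) (torus n)"
  unfolding f_D_def using u_vec_in_Ints u_vec_eq_0 by (rule tor_Fmap_hom)

lemma f_Ds_hom: "f_Ds n \<in> hom (torus (n+1)) (torus n)"
  unfolding f_Ds_def using v_vec_in_Ints v_vec_eq_0 by (rule tor_Fmap_hom)

lemma fT_D_hom: "fT_D n \<in> hom (torus n) (torus (n+1))"
  unfolding fT_D_def using u_vec_in_Ints by (rule tor_FmapT_hom)

lemma fT_Ds_hom: "fT_Ds n \<in> hom (torus n) (torus (n+1))"
  unfolding fT_Ds_def using v_vec_in_Ints by (rule tor_FmapT_hom)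

lemma sum_mult_e_vec: "j < n \<Longrightarrow> (\<Sum>i<n. x i * e_vec n i j) = x j"
  by (simp add: e_vec_def if_distrib cong: if_cong)

lemma dotn_e_vec:
  assumes "i < n"
  shows "dotn n (e_vec n i) y = y i"
proof -
  have "dotn n (e_vec n i) y = (\<Sum>j<n. if i = j then y j else 0)"
    unfolding dotn_def by (rule sum.cong) (auto simp: e_vec_def)
  then show ?thesis using assms by simp
qed

lemma dotn_one_vec: "dotn n (one_vec n) y = (\<Sum>j<n. y j)"
  by (auto simp: dotn_def one_vec_def intro: sum.cong)

lemma dotn_uminus: "dotn n (\<lambda>j. - a j) y = - dotn n a y"
  by (simp add: dotn_def sum_negf)

lemma dotn_scale_diff: "dotn n (\<lambda>j. c * a j - b j) y = c * dotn n a y - dotn n b y"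
  by (simp add: dotn_def algebra_simps sum_subtractf sum_distrib_left)

lemma Fmap_u_vec: "Fmap u_vec n x j = (if j < n then x j - x n else 0)"
  by (simp add: Fmap_def u_vec_def e_vec_def one_vec_def lessThan_Suc_atMost[symmetric]
      if_distrib cong: if_cong)

lemma Fmap_v_vec:
  "Fmap v_vec n x j = (if j < n then real (n+1) * x j - (\<Sum>i<n. x i) - x n else 0)"
proof (cases "j < n")
  case True
  have "Fmap v_vec n x j = (\<Sum>i<n. x i * (real (n+1) * e_vec n i j - 1)) - x n"
    using True by (simp add: Fmap_def v_vec_def one_vec_def lessThan_Suc_atMost[symmetric])
  also have "(\<Sum>i<n. x i * (real (n+1) * e_vec n i j - 1))
      = real (n+1) * (\<Sum>i<n. x i * e_vec n i j) - (\<Sum>i<n. x i)"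
    by (simp add: algebra_simps sum_subtractf sum_distrib_left)
  finally show ?thesis using True by (simp add: sum_mult_e_vec)
qed (simp add: Fmap_def v_vec_eq_0)

lemma FmapT_u_vec:
  "FmapT u_vec n y i = (if i < n then y i else if i = n then - (\<Sum>j<n. y j) else 0)"
  by (cases "i < n"; cases "i = n")
    (simp_all add: FmapT_def u_vec_def dotn_e_vec dotn_uminus dotn_one_vec)

lemma FmapT_v_vec:
  "FmapT v_vec n y i =
     (if i < n then real (n+1) * y i - (\<Sum>j<n. y j) else if i = n then - (\<Sum>j<n. y j) else 0)"
  by (cases "i < n"; cases "i = n")
    (simp_all add: FmapT_def v_vec_def dotn_e_vec dotn_uminus dotn_one_vec dotn_scale_diff)

lemma f_D_comp_fT_Ds: "f_D n \<circ> fT_Ds n = scale_torus n (n+1)"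
proof
  fix y
  have "(f_D n \<circ> fT_Ds n) y = tor (Fmap u_vec n \<circ> FmapT v_vec n) y"
    unfolding f_D_def fT_Ds_def
    by (simp add: tor_tor respects_int_lattice_Fmap u_vec_in_Ints)
  also have "\<dots> = scale_torus n (n+1) y"
    by (simp add: scale_torus_def tor_def fun_eq_iff Fmap_u_vec FmapT_v_vec)
  finally show "(f_D n \<circ> fT_Ds n) y = scale_torus n (n+1) y" .
qed

lemma f_Ds_comp_fT_D: "f_Ds n \<circ> fT_D n = scale_torus n (n+1)"
proof
  fix y
  have sum: "(\<Sum>i<n. FmapT u_vec n y i) = (\<Sum>i<n. y i)"
    by (simp add: FmapT_u_vec)
  have "(f_Ds n \<circ> fT_D n) y = tor (Fmap v_vec n \<circ> FmapT u_vec n) y"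
    unfolding f_Ds_def fT_D_def
    by (simp add: tor_tor respects_int_lattice_Fmap v_vec_in_Ints)
  also have "\<dots> = scale_torus n (n+1) y"
    using sum by (simp add: scale_torus_def tor_def fun_eq_iff Fmap_v_vec FmapT_u_vec)
  finally show "(f_Ds n \<circ> fT_D n) y = scale_torus n (n+1) y" .
qed

section \<open>Torsion points of the torus\<close>

definition torsion_point :: "nat \<Rightarrow> nat \<Rightarrow> (nat \<Rightarrow> int) \<Rightarrow> nat \<Rightarrow> real" where
  "torsion_point k m c = (\<lambda>j. if j < k then of_int (c j) / real m else 0)"

lemma frac_of_int_div:
  assumes "0 < m"
  shows "frac (of_int c / real m) = of_int (c mod int m) / real m"
proof (unfold frac_unique_iff, intro conjI)
  have "real_of_int c = real_of_int (c div int m) * real m + real_of_int (c mod int m)"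
    by (metis of_int_add of_int_mult of_int_of_nat_eq div_mult_mod_eq)
  then have "of_int c / real m - of_int (c mod int m) / real m = of_int (c div int m)"
    using assms by (simp add: field_simps)
  then show "of_int c / real m - of_int (c mod int m) / real m \<in> \<int>" by simp
  have "0 \<le> c mod int m" "c mod int m < int m" using assms by simp_all
  then have "0 \<le> real_of_int (c mod int m)" "real_of_int (c mod int m) < real m"
    by linarith+
  then show "0 \<le> of_int (c mod int m) / real m" "of_int (c mod int m) / real m < (1::real)"
    using assms by (simp_all add: divide_less_eq)
qed

lemma torsion_point_mult:
  assumes "0 < m"
  shows "torsion_point k m (c \<otimes>\<^bsub>product_group {..<k} (\<lambda>_. integer_mod_group m)\<^esub> d)
    = torsion_point k m c \<otimes>\<^bsub>torus k\<^esub> torsion_point k m d"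
proof
  fix j
  show "torsion_point k m (c \<otimes>\<^bsub>product_group {..<k} (\<lambda>_. integer_mod_group m)\<^esub> d) j
    = (torsion_point k m c \<otimes>\<^bsub>torus k\<^esub> torsion_point k m d) j"
  proof (cases "j < k")
    case True
    have "frac (of_int (c j) / real m + of_int (d j) / real m)
      = of_int ((c j + d j) mod int m) / real m"
      using frac_of_int_div[OF assms, of "c j + d j"] by (simp add: add_divide_distrib)
    then show ?thesis
      using True by (simp add: torsion_point_def torus_mult_eq)
  qed (simp add: torsion_point_def torus_mult_eq)
qed

lemma torsion_point_in_kernel:
  assumes "0 < m" and c: "c \<in> carrier (product_group {..<k} (\<lambda>_. integer_mod_group m))"
  shows "torsion_point k m c \<in> kernel (torus k) (torus k) (scale_torus k m)"
proof -
  have "0 \<le> real_of_int (c j) \<and> real_of_int (c j) < real m" if "j < k" for j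
  proof -
    have "c j \<in> {0..<int m}"
      using c assms that by (simp add: carrier_integer_mod_group PiE_iff)
    then show ?thesis
      by (metis atLeastLessThan_iff of_int_less_iff of_int_of_nat_eq of_int_0_le_iff)
  qed
  then have "torsion_point k m c \<in> carrier (torus k)"
    using assms by (simp add: torsion_point_def torus_def divide_less_eq)
  moreover have "real m * torsion_point k m c j \<in> \<int>" if "j < k" for j
    using assms that by (simp add: torsion_point_def)
  ultimately show ?thesis
    by (simp add: kernel_scale_torus)
qed

lemma ex_torsion_point_eq:
  assumes "0 < m" and "y \<in> kernel (torus k) (torus k) (scale_torus k m)"
  shows "\<exists>c \<in> carrier (product_group {..<k} (\<lambda>_. integer_mod_group m)). torsion_point k m c = y"
proof
  have y: "y \<in> carrier (torus k)" and my: "\<And>j. j < k \<Longrightarrow> real m * y j \<in> \<int>"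
    using assms(2) by (simp_all add: kernel_scale_torus)
  define c where "c = (\<lambda>j\<in>{..<k}. \<lfloor>real m * y j\<rfloor>)"
  have c: "of_int (c j) = real m * y j" if "j < k" for j
    using my[OF that] that by (auto simp: c_def elim!: Ints_cases)
  have "c j \<in> {0..<int m}" if "j < k" for j
  proof -
    have "0 \<le> y j" "y j < 1" using y that by (simp_all add: torus_def)
    then have "0 \<le> real m * y j" "real m * y j < real m * 1"
      using assms by (simp, intro mult_strict_left_mono) simp_all
    then show ?thesis
      using c[OF that] by (metis atLeastLessThan_iff mult_1_right of_int_0_le_iff
          of_int_less_iff of_int_of_nat_eq)
  qed
  then show "c \<in> carrier (product_group {..<k} (\<lambda>_. integer_mod_group m))"
    using assms by (simp add: carrier_integer_mod_group PiE_iff c_def)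
  show "torsion_point k m c = y"
  proof
    fix j show "torsion_point k m c j = y j"
    proof (cases "j < k")
      case True then show ?thesis using c[OF True] assms by (simp add: torsion_point_def)
    next
      case False then show ?thesis using y by (simp add: torsion_point_def torus_def)
    qed
  qed
qed

lemma torsion_point_image:
  assumes "0 < m"
  shows "torsion_point k m ` carrier (product_group {..<k} (\<lambda>_. integer_mod_group m))
    = kernel (torus k) (torus k) (scale_torus k m)"
  using torsion_point_in_kernel[OF assms] ex_torsion_point_eq[OF assms] by blast

lemma inj_on_torsion_point:
  assumes "0 < m"
  shows "inj_on (torsion_point k m) (carrier (product_group {..<k} (\<lambda>_. integer_mod_group m)))"
proof (rule inj_onI)
  fix c d
  assume c: "c \<in> carrier (product_group {..<k} (\<lambda>_. integer_mod_group m))"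
    and d: "d \<in> carrier (product_group {..<k} (\<lambda>_. integer_mod_group m))"
    and eq: "torsion_point k m c = torsion_point k m d"
  show "c = d"
  proof (rule PiE_ext[OF c[unfolded carrier_product_group] d[unfolded carrier_product_group]])
    fix j assume "j \<in> {..<k}"
    then have "of_int (c j) / real m = of_int (d j) / real m"
      using fun_cong[OF eq, of j] by (simp add: torsion_point_def)
    then show "c j = d j" using assms by simp
  qed
qed

lemma torsion_point_iso:
  assumes "0 < m"
  shows "torsion_point k m \<in> iso (product_group {..<k} (\<lambda>_. integer_mod_group m))
    ((torus k)\<lparr>carrier := kernel (torus k) (torus k) (scale_torus k m)\<rparr>)"
proof -
  note image = torsion_point_image[OF assms, symmetric]
  have "torsion_point k m \<in> hom (product_group {..<k} (\<lambda>_. integer_mod_group m))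
    ((torus k)\<lparr>carrier := kernel (torus k) (torus k) (scale_torus k m)\<rparr>)"
    by (rule homI) (simp_all add: image torsion_point_mult[OF assms] del: mult_product_group)
  then show ?thesis
    using image inj_on_torsion_point[OF assms] by (simp add: iso_def bij_betw_def)
qed

lemma kernel_scale_torus_iso:
  assumes "0 < m"
  shows "(torus k)\<lparr>carrier := kernel (torus k) (torus k) (scale_torus k m)\<rparr>
    \<cong> product_group {..<k} (\<lambda>_. integer_mod_group m)"
  by (rule group.iso_sym[OF _ is_isoI[OF torsion_point_iso[OF assms]]]) simp

lemma finite_kernel_scale_torus:
  assumes "0 < m"
  shows "finite (kernel (torus k) (torus k) (scale_torus k m))"
  unfolding torsion_point_image[OF assms, symmetric]
  using assms by (intro finite_imageI) (simp add: carrier_integer_mod_group finite_PiE)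

theorem mainTheorem3:
  fixes n :: nat
  assumes "n \<ge> 1"
  defines "T1 \<equiv> torus (n+1)" and "Tn \<equiv> torus n" and "K \<equiv> K_set n"
  defines "A \<equiv> fT_Ds n ` carrier (torus n)" and "B \<equiv> fT_D n ` carrier (torus n)"
  shows "K = kernel Tn Tn (f_Ds n \<circ> fT_D n) \<and>
       (Tn\<lparr>carrier := K\<rparr> \<cong> product_group {..<n} (\<lambda>_. integer_mod_group (n+1))) \<and>
       (\<exists>\<phi>. \<phi> \<in> iso (T1\<lparr>carrier := A\<rparr> Mod D_D n) (T1 Mod N_D n)
              \<and> (\<forall>a\<in>A. \<phi> (D_D n #>\<^bsub>T1\<^esub> a) = N_D n #>\<^bsub>T1\<^esub> a)) \<and>
       (\<exists>\<psi>. \<psi> \<in> iso (Tn Mod K) (T1\<lparr>carrier := A\<rparr> Mod D_D n)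
              \<and> (\<forall>x\<in>carrier Tn. \<psi> (K #>\<^bsub>Tn\<^esub> x) = D_D n #>\<^bsub>T1\<^esub> fT_Ds n x)) \<and>
       (\<exists>\<phi>. \<phi> \<in> iso (T1\<lparr>carrier := B\<rparr> Mod D_Ds n) (T1 Mod N_Ds n)
              \<and> (\<forall>a\<in>B. \<phi> (D_Ds n #>\<^bsub>T1\<^esub> a) = N_Ds n #>\<^bsub>T1\<^esub> a)) \<and>
       (\<exists>\<psi>. \<psi> \<in> iso (Tn Mod K) (T1\<lparr>carrier := B\<rparr> Mod D_Ds n)
              \<and> (\<forall>x\<in>carrier Tn. \<psi> (K #>\<^bsub>Tn\<^esub> x) = D_Ds n #>\<^bsub>T1\<^esub> fT_D n x)) \<and>
       finite (D_D n) \<and> finite (D_Ds n)"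
proof -
  have K: "K = kernel (torus n) (torus n) (scale_torus n (n+1))"
    by (simp add: K_def K_set_def f_D_comp_fT_Ds)
  have surj: "(f_D n \<circ> fT_Ds n) ` carrier (torus n) = carrier (torus n)"
    "(f_Ds n \<circ> fT_D n) ` carrier (torus n) = carrier (torus n)"
    by (simp_all add: f_D_comp_fT_Ds f_Ds_comp_fT_D scale_torus_surj)
  note iso_D = group.FactGroup_isos_of_surj_comp[OF group_torus group_torus f_D_hom fT_Ds_hom surj(1)]
  note iso_Ds = group.FactGroup_isos_of_surj_comp[OF group_torus group_torus f_Ds_hom fT_D_hom surj(2)]
  have "finite K"
    unfolding K by (rule finite_kernel_scale_torus) simp
  then have "finite (D_D n)" "finite (D_Ds n)"
    using iso_D(3) iso_Ds(3)
    by (auto simp: D_D_def D_Ds_def N_D_def N_Ds_def K f_D_comp_fT_Ds f_Ds_comp_fT_D)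
  moreover have "Tn\<lparr>carrier := K\<rparr> \<cong> product_group {..<n} (\<lambda>_. integer_mod_group (n+1))"
    unfolding Tn_def K by (rule kernel_scale_torus_iso) simp
  ultimately show ?thesis
    using iso_D(1,2) iso_Ds(1,2)
    unfolding T1_def Tn_def A_def B_def D_D_def D_Ds_def N_D_def N_Ds_def K
      f_D_comp_fT_Ds f_Ds_comp_fT_D
    by simp
qed

end
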